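(* Let $n\ge1$, $p$ a prime, $R\subset E_n$, $S\subset E_n$ nonempty, $T=T_{R,S}$ as in the context, and $t\in S$. (1) If $t\notin T$, then $\mathsf{gen}^{(t)}_{R,S}\in\mathcal{C}_{\mathsf{pHa},S}$. (2) If $t\in T$, then $\mathsf{gen}^{(t)}_{R,S}\in\bigcap_{j\in S}\mathcal{C}_{R,S\setminus\{j\}}$.
   Context: $E_n=\{1,\dots,n\}$, indices mod $n$; $e_i$ standard basis ($e_0=e_n$). $\delta_U^{(i)}=-1$ if $i\in U$, else $1$. $F^{(d)}_U(x)=\sum_{i=0}^{n-1}p^i\delta_U^{(d+i)}x_{d+i}$. For nonempty $S'\subset E_n$, $T_{R,S'}$ is the unique subset such that for each $i$ with $i+1\notin S'$: if $i\notin R$ exactly one of $i,i+1$ lies in $T_{R,S'}$, if $i\in R$ both or neither lie in it; and for each $i\in S'$, $i-1\in T_{R,S'}\iff i-1\in R$. Then $\mathcal{C}_{R,S'}=\{x\in\mathbb{Z}^n:F^{(i)}_{T_{R,S'}}(x)\le0\ \forall i\in S'\}$, and $\mathcal{C}_{R,\emptyset}=\mathbb{Z}^n$. With $T=T_{R,S}$, $\mathsf{gen}^{(t)}_{R,S}=\delta_T^{(t)}e_t-p\delta_R^{(t-1)}e_{t-1}$. Saturation of a submonoid $A\subset\mathbb{Z}^n$: $\{x: mx\in A\text{ for some }m\ge1\}$. $\mathsf{ha}^{(i)}_{R,S}=-\delta_S^{(i)}e_i-p\delta_R^{(i-1)}e_{i-1}$ and $\mathcal{C}_{\mathsf{pHa},S}$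 is the saturation of $\sum_{i\in S}\mathbb{N}\mathsf{ha}^{(i)}_{R,S}+\sum_{i\notin S}\mathbb{Z}\mathsf{ha}^{(i)}_{R,S}$. *)

theory Defs
  imports "HOL-Computational_Algebra.Primes"
begin

text \<open>Vectors of Z^n are represented as functions nat => int supported on E_n = {1..n}.
  Indices are integers taken modulo n, normalised into {1..n} by red (so e_0 = e_n).\<close>

definition red :: "nat \<Rightarrow> int \<Rightarrow> nat" where
  "red n i = nat ((i - 1) mod int n + 1)"

definition zvec :: "nat \<Rightarrow> (nat \<Rightarrow> int) set" where
  "zvec n = {x. \<forall>k. k \<notin> {1..n} \<longrightarrow> x k = 0}"

definition ebasis :: "nat \<Rightarrow> int \<Rightarrow> (nat \<Rightarrow> int)" where
  "ebasis n i = (\<lambda>k. if k = red n i then 1 else 0)"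

definition delta :: "nat \<Rightarrow> nat set \<Rightarrow> int \<Rightarrow> int" where
  "delta n U i = (if red n i \<in> U then -1 else 1)"

definition Ffun :: "nat \<Rightarrow> nat \<Rightarrow> nat set \<Rightarrow> int \<Rightarrow> (nat \<Rightarrow> int) \<Rightarrow> int" where
  "Ffun n p U d x = (\<Sum>i<n. int p ^ i * delta n U (d + int i) * x (red n (d + int i)))"

definition Tset :: "nat \<Rightarrow> nat set \<Rightarrow> nat set \<Rightarrow> nat set" where
  "Tset n R S' = (THE T. T \<subseteq> {1..n} \<and>
     (\<forall>i\<in>{1..n}. red n (int i + 1) \<notin> S' \<longrightarrow>
        (if i \<notin> R then ((i \<in> T) \<noteq> (red n (int i + 1) \<in> T))
         else ((i \<in> T) = (red n (int i + 1) \<in> T)))) \<and>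
     (\<forall>i\<in>S'. (red n (int i - 1) \<in> T) = (red n (int i - 1) \<in> R)))"

definition Ccone :: "nat \<Rightarrow> nat \<Rightarrow> nat set \<Rightarrow> nat set \<Rightarrow> (nat \<Rightarrow> int) set" where
  "Ccone n p R S' = (if S' = {} then zvec n
     else {x \<in> zvec n. \<forall>i\<in>S'. Ffun n p (Tset n R S') (int i) x \<le> 0})"

definition gen :: "nat \<Rightarrow> nat \<Rightarrow> nat set \<Rightarrow> nat set \<Rightarrow> nat \<Rightarrow> (nat \<Rightarrow> int)" where
  "gen n p R S t = (\<lambda>k. delta n (Tset n R S) (int t) * ebasis n (int t) k
                       - int p * delta n R (int t - 1) * ebasis n (int t - 1) k)"

definition ha :: "nat \<Rightarrow> nat \<Rightarrow> nat set \<Rightarrow> nat set \<Rightarrow> nat \<Rightarrow> (nat \<Rightarrow> int)" where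
  "ha n p R S i = (\<lambda>k. - delta n S (int i) * ebasis n (int i) k
                       - int p * delta n R (int i - 1) * ebasis n (int i - 1) k)"

definition saturation :: "nat \<Rightarrow> (nat \<Rightarrow> int) set \<Rightarrow> (nat \<Rightarrow> int) set" where
  "saturation n A = {x \<in> zvec n. \<exists>m::nat. m \<ge> 1 \<and> (\<lambda>k. int m * x k) \<in> A}"

definition haMonoid :: "nat \<Rightarrow> nat \<Rightarrow> nat set \<Rightarrow> nat set \<Rightarrow> (nat \<Rightarrow> int) set" where
  "haMonoid n p R S = {(\<lambda>k. \<Sum>i\<in>{1..n}. c i * ha n p R S i k) | c :: nat \<Rightarrow> int.
        \<forall>i\<in>S. c i \<ge> 0}"

definition CpHa :: "nat \<Rightarrow> nat \<Rightarrow> nat set \<Rightarrow> nat set \<Rightarrow> (nat \<Rightarrow> int) set" where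
  "CpHa n p R S = saturation n (haMonoid n p R S)"

end

theory Submission imports Defs begin

text \<open>If \<open>t \<notin> T\<close>, then \<open>gen t\<close> is literally the generator \<open>ha t\<close> of the monoid.
  If \<open>t \<in> T\<close>, take any \<open>S' \<subseteq> E_n\<close>, \<open>T' = T_{R,S'}\<close> and \<open>d \<in> S'\<close>. Only the coordinates
  \<open>t\<close> and \<open>t - 1\<close> of \<open>gen t\<close> are nonzero, so \<open>F_d(gen t) = -p^a \<delta>_T'(t) - p^(b+1) \<delta>_T'(t-1) \<delta>_R(t-1)\<close>,
  where \<open>p^a\<close> and \<open>p^b\<close> are the weights of \<open>t\<close> and \<open>t - 1\<close> in \<open>F_d\<close>. The condition on \<open>T'\<close> at
  the index \<open>t - 1\<close> makes \<open>\<delta>_T'(t-1) \<delta>_R(t-1)\<close> equal to \<open>1\<close> if \<open>t \<in> S'\<close> and to \<open>-\<delta>_T'(t)\<close>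
  otherwise. For \<open>d \<noteq> t\<close> we have \<open>a = b + 1\<close>, so \<open>F_d(gen t)\<close> is \<open>-p^a\<close> times a nonnegative
  number; for \<open>d = t\<close> it is \<open>-\<delta>_T'(t) - p^n \<le> 0\<close>.

  That \<open>T_{R,S'}\<close> is well defined for nonempty \<open>S'\<close> needs an argument of its own: whether
  \<open>i \<in> T'\<close> is forced by walking forward from \<open>i\<close> to the next element of \<open>S'\<close>.\<close>

lemma red_int: "n \<ge> 1 \<Longrightarrow> int (red n a) = (a - 1) mod int n + 1"
  unfolding red_def by simp

lemma red_in_range: "n \<ge> 1 \<Longrightarrow> red n a \<in> {1..n}"
proof -
  assume n: "n \<ge> 1"
  have "0 \<le> (a - 1) mod int n" "(a - 1) mod int n < int n"
    using n by simp_all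
  then show ?thesis
    using red_int[OF n, of a] by simp
qed

lemma red_eq_red_iff: "n \<ge> 1 \<Longrightarrow> red n a = red n b \<longleftrightarrow> a mod int n = b mod int n"
proof -
  assume n: "n \<ge> 1"
  have "red n a = red n b \<longleftrightarrow> (a - 1) mod int n = (b - 1) mod int n"
    using red_int[OF n, of a] red_int[OF n, of b] by (metis add_right_cancel of_nat_eq_iff)
  also have "\<dots> \<longleftrightarrow> a mod int n = b mod int n"
    by (simp add: mod_eq_dvd_iff)
  finally show ?thesis .
qed

lemma red_of_nat: "k \<in> {1..n} \<Longrightarrow> red n (int k) = k"
  unfolding red_def by auto

lemma red_red_add: "n \<ge> 1 \<Longrightarrow> red n (int (red n a) + b) = red n (a + b)"
  by (simp add: red_eq_red_iff red_int mod_simps add.assoc)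

lemma red_add_eq_red_iff:
  assumes n: "n \<ge> 1" and i: "i < n"
  shows "red n (d + int i) = red n c \<longleftrightarrow> i = nat ((c - d) mod int n)"
proof -
  have "red n (d + int i) = red n c \<longleftrightarrow> int i mod int n = (c - d) mod int n"
    unfolding red_eq_red_iff[OF n] by (simp add: mod_eq_dvd_iff algebra_simps)
  also have "\<dots> \<longleftrightarrow> i = nat ((c - d) mod int n)"
    using i n by auto
  finally show ?thesis .
qed

lemma red_reaches:
  assumes n: "n \<ge> 1" and s: "s \<in> {1..n}"
  shows "\<exists>e < n. red n (int k + int e + 1) = s"
proof
  let ?e = "nat ((int s - int k - 1) mod int n)"
  have "(int k + int ?e + 1) mod int n = ((int s - int k - 1) mod int n + (int k + 1)) mod int n"
    using n by (simp add: algebra_simps)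
  also have "\<dots> = int s mod int n"
    by (simp add: mod_add_left_eq)
  finally have "red n (int k + int ?e + 1) = red n (int s)"
    using n by (simp add: red_eq_red_iff)
  then show "?e < n \<and> red n (int k + int ?e + 1) = s"
    using n red_of_nat[OF s] by (simp add: nat_less_iff)
qed

text \<open>The conditions defining \<open>Tset\<close>, rearranged so that each index \<open>i\<close> carries exactly one
  condition, selected by whether \<open>i + 1 \<in> S'\<close>.\<close>

definition Tset_conditions :: "nat \<Rightarrow> nat set \<Rightarrow> nat set \<Rightarrow> nat set \<Rightarrow> bool" where
  "Tset_conditions n R S' T \<longleftrightarrow> T \<subseteq> {1..n} \<and>
     (\<forall>i\<in>{1..n}. (i \<in> T) =
        (if red n (int i + 1) \<in> S' then i \<in> R else (red n (int i + 1) \<in> T) = (i \<in> R)))"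

lemma Tset_eq_The:
  assumes n: "n \<ge> 1" and S': "S' \<subseteq> {1..n}"
  shows "Tset n R S' = The (Tset_conditions n R S')"
proof -
  have pred_succ: "red n (int (red n (int i + 1)) - 1) = i" if "i \<in> {1..n}" for i
    using red_red_add[OF n, of "int i + 1" "- 1"] red_of_nat[OF that] by simp
  have succ_pred: "red n (int (red n (int s - 1)) + 1) = s" if "s \<in> S'" for s
    using red_red_add[OF n, of "int s - 1" 1] red_of_nat[of s n] that S' by auto
  have "(\<forall>s\<in>S'. (red n (int s - 1) \<in> T) = (red n (int s - 1) \<in> R)) \<longleftrightarrow>
        (\<forall>i\<in>{1..n}. red n (int i + 1) \<in> S' \<longrightarrow> (i \<in> T) = (i \<in> R))" for T
    using pred_succ succ_pred red_in_range[OF n] by metis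
  moreover have "(\<forall>i\<in>{1..n}. (i \<in> T) =
        (if red n (int i + 1) \<in> S' then i \<in> R else (red n (int i + 1) \<in> T) = (i \<in> R))) \<longleftrightarrow>
      (\<forall>i\<in>{1..n}. red n (int i + 1) \<notin> S' \<longrightarrow>
        (if i \<notin> R then ((i \<in> T) \<noteq> (red n (int i + 1) \<in> T)) else ((i \<in> T) = (red n (int i + 1) \<in> T)))) \<and>
      (\<forall>i\<in>{1..n}. red n (int i + 1) \<in> S' \<longrightarrow> (i \<in> T) = (i \<in> R))" for T
    by auto
  ultimately show ?thesis
    unfolding Tset_def Tset_conditions_def by presburger
qed

fun Tset_walk :: "nat \<Rightarrow> nat set \<Rightarrow> nat set \<Rightarrow> nat \<Rightarrow> nat \<Rightarrow> bool" where
  "Tset_walk n R S' 0 i = (i \<in> R)"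
| "Tset_walk n R S' (Suc d) i =
     (if red n (int i + 1) \<in> S' then i \<in> R else Tset_walk n R S' d (red n (int i + 1)) = (i \<in> R))"

lemma red_succ_add:
  "n \<ge> 1 \<Longrightarrow> red n (int (red n (int i + 1)) + int e + 1) = red n (int i + int (Suc e) + 1)"
  using red_red_add[of n "int i + 1" "int e + 1"] by (simp add: algebra_simps)

lemma Tset_walk_stable:
  assumes n: "n \<ge> 1"
  shows "red n (int i + int e + 1) \<in> S' \<Longrightarrow> e \<le> d \<Longrightarrow> Tset_walk n R S' d i = Tset_walk n R S' e i"
proof (induction e arbitrary: i d)
  case 0
  then show ?case by (cases d) simp_all
next
  case (Suc e)
  then obtain d' where d: "d = Suc d'" and "e \<le> d'"
    by (cases d) auto
  with Suc.IH[of "red n (int i + 1)" d'] Suc.prems(1) show ?case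
    by (simp add: red_succ_add[OF n])
qed

lemma Tset_conditions_imp_walk:
  assumes n: "n \<ge> 1" and T: "Tset_conditions n R S' T"
  shows "i \<in> {1..n} \<Longrightarrow> red n (int i + int e + 1) \<in> S' \<Longrightarrow> (i \<in> T) = Tset_walk n R S' e i"
proof (induction e arbitrary: i)
  case 0
  then show ?case using T by (simp add: Tset_conditions_def)
next
  case (Suc e)
  have "(red n (int i + 1) \<in> T) = Tset_walk n R S' e (red n (int i + 1))"
    using Suc.IH[OF red_in_range[OF n]] Suc.prems(2) by (simp add: red_succ_add[OF n])
  then show ?case
    using T Suc.prems(1) unfolding Tset_conditions_def by auto
qed

lemma Tset_conditions_ex1:
  assumes n: "n \<ge> 1" and S': "S' \<subseteq> {1..n}" "S' \<noteq> {}"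
  shows "\<exists>!T. Tset_conditions n R S' T"
proof -
  obtain s where s: "s \<in> S'"
    using S'(2) by blast
  have reach: "\<exists>e < n. red n (int i + int e + 1) \<in> S'" for i
  proof -
    have "s \<in> {1..n}"
      using s S'(1) by blast
    then show ?thesis
      using red_reaches[OF n, of s i] s by metis
  qed
  have walk_n: "Tset_walk n R S' n i = Tset_walk n R S' e i"
    if "e < n" "red n (int i + int e + 1) \<in> S'" for i e
    using Tset_walk_stable[OF n that(2), of n] that(1) by simp
  define T0 where "T0 = {i \<in> {1..n}. Tset_walk n R S' n i}"
  have "Tset_conditions n R S' T0"
  proof -
    obtain m where m: "n = Suc m"
      using n by (cases n) auto
    have walk_m: "Tset_walk n R S' m j = Tset_walk n R S' n j" for j
    proof -
      obtain e where e: "e < n" "red n (int j + int e + 1) \<in> S'"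
        using reach by blast
      then have "Tset_walk n R S' m j = Tset_walk n R S' e j"
        using Tset_walk_stable[OF n e(2), of m] m by simp
      then show ?thesis
        using walk_n[OF e] by simp
    qed
    have walk_unfold: "Tset_walk n R S' n i =
        (if red n (int i + 1) \<in> S' then i \<in> R else Tset_walk n R S' n (red n (int i + 1)) = (i \<in> R))" for i
      using Tset_walk.simps(2)[of n R S' m i] unfolding walk_m m[symmetric] .
    have T0_mem: "j \<in> T0 \<longleftrightarrow> Tset_walk n R S' n j" if "j \<in> {1..n}" for j
      using that unfolding T0_def by blast
    show ?thesis
      unfolding Tset_conditions_def
    proof (intro conjI ballI)
      show "T0 \<subseteq> {1..n}"
        unfolding T0_def by blast
      show "(i \<in> T0) = (if red n (int i + 1) \<in> S' then i \<in> R else (red n (int i + 1) \<in> T0) = (i \<in> R))"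
        if "i \<in> {1..n}" for i
        unfolding T0_mem[OF that] T0_mem[OF red_in_range[OF n]] by (rule walk_unfold)
    qed
  qed
  moreover have "T = T0" if "Tset_conditions n R S' T" for T
  proof -
    have "(i \<in> T) = Tset_walk n R S' n i" if "i \<in> {1..n}" for i
    proof -
      obtain e where e: "e < n" "red n (int i + int e + 1) \<in> S'"
        using reach by blast
      then show ?thesis
        using Tset_conditions_imp_walk[OF n \<open>Tset_conditions n R S' T\<close> that e(2)] walk_n[OF e] by simp
    qed
    moreover have "T \<subseteq> {1..n}"
      using that unfolding Tset_conditions_def by blast
    ultimately show ?thesis
      unfolding T0_def by blast
  qed
  ultimately show ?thesis by blast
qed

lemma Tset_step:
  assumes n: "n \<ge> 1" and S': "S' \<subseteq> {1..n}" "S' \<noteq> {}" and i: "i \<in> {1..n}"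
  shows "(i \<in> Tset n R S') =
    (if red n (int i + 1) \<in> S' then i \<in> R else (red n (int i + 1) \<in> Tset n R S') = (i \<in> R))"
  using theI'[OF Tset_conditions_ex1[OF n S', of R]] i
  unfolding Tset_eq_The[OF n S'(1)] Tset_conditions_def by blast

lemma ebasis_in_zvec: "n \<ge> 1 \<Longrightarrow> ebasis n c \<in> zvec n"
  unfolding zvec_def ebasis_def using red_in_range by fastforce

lemma zvec_lincomb: "x \<in> zvec n \<Longrightarrow> y \<in> zvec n \<Longrightarrow> (\<lambda>k. a * x k - b * y k) \<in> zvec n"
  unfolding zvec_def by simp

lemma gen_in_zvec: "n \<ge> 1 \<Longrightarrow> gen n p R S t \<in> zvec n"
  unfolding gen_def by (intro zvec_lincomb ebasis_in_zvec)

lemma ha_in_zvec: "n \<ge> 1 \<Longrightarrow> ha n p R S i \<in> zvec n"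
  unfolding ha_def by (intro zvec_lincomb ebasis_in_zvec)

lemma delta_of_nat: "k \<in> {1..n} \<Longrightarrow> delta n U (int k) = (if k \<in> U then -1 else 1)"
  unfolding delta_def by (simp add: red_of_nat)

lemma delta_Tset_pred:
  assumes n: "n \<ge> 1" and S': "S' \<subseteq> {1..n}" "S' \<noteq> {}" and t: "t \<in> {1..n}"
  shows "delta n (Tset n R S') (int t - 1) * delta n R (int t - 1) =
    (if t \<in> S' then 1 else - delta n (Tset n R S') (int t))"
proof -
  let ?i = "red n (int t - 1)"
  have "red n (int ?i + 1) = t"
    using red_red_add[OF n, of "int t - 1" 1] red_of_nat[OF t] by simp
  then have "(?i \<in> Tset n R S') = (if t \<in> S' then ?i \<in> R else (t \<in> Tset n R S') = (?i \<in> R))"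
    using Tset_step[OF n S' red_in_range[OF n]] by metis
  then show ?thesis
    unfolding delta_def red_of_nat[OF t] by auto
qed

lemma Ffun_lincomb:
  "Ffun n p U d (\<lambda>k. a * x k - b * y k) = a * Ffun n p U d x - b * Ffun n p U d y"
  unfolding Ffun_def by (simp add: sum_subtractf sum_distrib_left algebra_simps)

lemma Ffun_ebasis:
  assumes n: "n \<ge> 1"
  shows "Ffun n p U d (ebasis n c) = int p ^ nat ((c - d) mod int n) * delta n U c"
proof -
  let ?j = "nat ((c - d) mod int n)"
  have j: "?j < n"
    using n by (simp add: nat_less_iff)
  have "Ffun n p U d (ebasis n c) = (\<Sum>i<n. if i = ?j then int p ^ i * delta n U (d + int i) else 0)"
    unfolding Ffun_def ebasis_def by (rule sum.cong) (auto simp: red_add_eq_red_iff[OF n])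
  also have "\<dots> = int p ^ ?j * delta n U (d + int ?j)"
    using j by simp
  also have "delta n U (d + int ?j) = delta n U c"
    using red_add_eq_red_iff[OF n j, of d c] unfolding delta_def by simp
  finally show ?thesis .
qed

lemma Ffun_gen:
  assumes n: "n \<ge> 1"
  shows "Ffun n p U d (gen n p R S t) =
    delta n (Tset n R S) (int t) * (int p ^ nat ((int t - d) mod int n) * delta n U (int t))
    - int p * delta n R (int t - 1) * (int p ^ nat ((int t - 1 - d) mod int n) * delta n U (int t - 1))"
  unfolding gen_def Ffun_lincomb Ffun_ebasis[OF n] ..

lemma nat_mod_diff_eq_Suc:
  assumes n: "n \<ge> 1" and d: "d \<in> {1..n}" and t: "t \<in> {1..n}" and "d \<noteq> t"
  shows "nat ((int t - int d) mod int n) = Suc (nat ((int t - 1 - int d) mod int n))"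
proof -
  have "(int t - int d) mod int n \<noteq> 0"
    using red_eq_red_iff[OF n, of "int t" "int d"] red_of_nat[OF t] red_of_nat[OF d] \<open>d \<noteq> t\<close>
    by (simp add: mod_eq_dvd_iff dvd_eq_mod_eq_0)
  moreover have "0 \<le> (int t - int d) mod int n" "(int t - int d) mod int n < int n"
    using n by simp_all
  moreover have "(int t - 1 - int d) mod int n = ((int t - int d) mod int n - 1) mod int n"
    by (simp add: mod_diff_left_eq algebra_simps)
  ultimately show ?thesis
    by (simp add: nat_diff_distrib)
qed

lemma gen_in_Ccone:
  assumes n: "n \<ge> 1" and p: "p \<ge> 1" and t: "t \<in> {1..n}" and tT: "t \<in> Tset n R S"
    and S': "S' \<subseteq> {1..n}"
  shows "gen n p R S t \<in> Ccone n p R S'"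
proof (cases "S' = {}")
  case True
  then show ?thesis
    unfolding Ccone_def using gen_in_zvec[OF n] by simp
next
  case False
  let ?T' = "Tset n R S'"
  let ?a = "delta n ?T' (int t)"
  let ?b = "delta n ?T' (int t - 1) * delta n R (int t - 1)"
  have "Ffun n p ?T' (int d) (gen n p R S t) \<le> 0" if d: "d \<in> S'" for d
  proof -
    have F: "Ffun n p ?T' (int d) (gen n p R S t) =
        - (int p ^ nat ((int t - int d) mod int n) * ?a) - int p ^ nat ((int t - 1 - int d) mod int n) * int p * ?b"
      unfolding Ffun_gen[OF n] delta_of_nat[OF t] using tT by (simp add: algebra_simps)
    have a: "?a \<ge> -1"
      unfolding delta_def by simp
    show ?thesis
    proof (cases "d = t")
      case True
      have "nat ((int t - 1 - int d) mod int n) = n - 1"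
        using True n by (simp add: zmod_minus1 nat_diff_distrib)
      then have pn: "int p ^ nat ((int t - 1 - int d) mod int n) * int p = int p ^ n"
        using n by (simp add: power_Suc2[symmetric])
      have e0: "nat ((int t - int d) mod int n) = 0"
        using True by simp
      have b1: "?b = 1"
        using delta_Tset_pred[OF n S' False t] True d by simp
      have "int p ^ n \<ge> 1"
        using p by simp
      then show ?thesis
        unfolding F pn e0 b1 using a by simp
    next
      case False
      have dE: "d \<in> {1..n}"
        using d S' by blast
      have "Ffun n p ?T' (int d) (gen n p R S t) =
          - (int p ^ nat ((int t - int d) mod int n) * (?a + ?b))"
        unfolding F nat_mod_diff_eq_Suc[OF n dE t False] by (simp add: algebra_simps)
      moreover have "0 \<le> ?a + ?b"
        using delta_Tset_pred[OF n S' \<open>S' \<noteq> {}\<close> t] a by simp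
      ultimately show ?thesis
        by simp
    qed
  qed
  then show ?thesis
    unfolding Ccone_def using False gen_in_zvec[OF n] by simp
qed

lemma gen_eq_ha:
  assumes "t \<in> {1..n}" and "t \<in> S" and "t \<notin> Tset n R S"
  shows "gen n p R S t = ha n p R S t"
  unfolding gen_def ha_def delta_of_nat[OF assms(1)] using assms(2,3) by simp

lemma ha_in_haMonoid:
  assumes i: "i \<in> {1..n}"
  shows "ha n p R S i \<in> haMonoid n p R S"
proof -
  have "ha n p R S i = (\<lambda>k. \<Sum>j\<in>{1..n}. (if j = i then 1 else 0) * ha n p R S j k)"
    using i by (simp add: of_bool_def[symmetric])
  then show ?thesis
    unfolding haMonoid_def by force
qed

lemma mem_saturationI: "x \<in> zvec n \<Longrightarrow> x \<in> A \<Longrightarrow> x \<in> saturation n A"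
  unfolding saturation_def by (auto intro: exI[of _ 1])

lemma ha_in_CpHa: "n \<ge> 1 \<Longrightarrow> i \<in> {1..n} \<Longrightarrow> ha n p R S i \<in> CpHa n p R S"
  unfolding CpHa_def by (intro mem_saturationI ha_in_zvec ha_in_haMonoid)

theorem mainTheorem16:
  fixes n p t :: nat and R S :: "nat set"
  assumes "n \<ge> 1" and "prime p"
    and "R \<subseteq> {1..n}" and "S \<subseteq> {1..n}" and "S \<noteq> {}" and "t \<in> S"
  shows "(t \<notin> Tset n R S \<longrightarrow> gen n p R S t \<in> CpHa n p R S) \<and>
         (t \<in> Tset n R S \<longrightarrow> gen n p R S t \<in> (\<Inter>j\<in>S. Ccone n p R (S - {j})))"
proof (intro conjI impI)
  have t: "t \<in> {1..n}"
    using assms(4,6) by blast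
  show "gen n p R S t \<in> CpHa n p R S" if "t \<notin> Tset n R S"
    using gen_eq_ha[OF t assms(6) that] ha_in_CpHa[OF assms(1) t] by simp
  have "p \<ge> 1"
    using prime_ge_1_nat[OF assms(2)] .
  then show "gen n p R S t \<in> (\<Inter>j\<in>S. Ccone n p R (S - {j}))" if "t \<in> Tset n R S"
    using gen_in_Ccone[OF assms(1) _ t that] assms(4) by blast
qed

end
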